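(* Let $P,Q$ be lattice paths from $(0,0)$ to $(m,r)$ with $P$ never going above $Q$ and $[P,Q]$ a connected skew shape. Then the number of edges of the lattice path matroid polytope $\mathcal{P}(M[P,Q])$ equals $\sum_L \mathrm{area}(L',L)$, where the sum runs over all lattice paths $L$ from $(0,0)$ to $(m,r)$ inside the region $[P,Q]$, and $\mathrm{area}(L',L)$ is the number of unit boxes in the region between $L'=L'(P,L)$ and $L$.
   Context: Lattice paths use steps $E=(1,0)$, $N=(0,1)$. $M[P,Q]$ is the matroid on $[m+r]$ whose bases are the $r$-subsets $B$ such that the lattice path with North steps exactly at positions in $B$ stays in the region between $P$ and $Q$; $\mathcal{P}(M[P,Q])=\mathrm{conv}\{\sum_{b\in B}e_b: B\text{ a basis}\}\subseteq\mathbb{R}^{m+r}$. $[P,Q]$ connected means $P$ and $Q$ meet only at $(0,0)$ and $(m,r)$. For a lattice path $L$ inside $[P,Q]$ from $(0,0)$ to $(m,r)$, $L'=L'(P,L)$ is the lattice path that passes through all intersection points of $P$ and $L$ and, for each maximal connected region between $P$ and $L$ with starting point $(x,y)$ and ending point $(x+a,y+b)$, consists of the steps $E^aN^b$ from $(x,y)$ to $(x+a,y+b)$. *)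

theory Defs
  imports "HOL-Analysis.Analysis"
begin

text \<open>A lattice path with steps E=(1,0), N=(0,1) is encoded as a bool list:
  entry True = N step, False = E step.  Step number i (1-based) is entry i-1.\<close>

text \<open>Height (y-coordinate) after the first k steps; the point reached after k
  steps is (k - ht L k, ht L k).\<close>
definition ht :: "bool list \<Rightarrow> nat \<Rightarrow> nat" where
  "ht L k = length (filter id (take k L))"

definition lpath :: "nat \<Rightarrow> nat \<Rightarrow> bool list \<Rightarrow> bool" where
  "lpath m r L \<longleftrightarrow> length L = m + r \<and> ht L (m + r) = r"

definition never_above :: "bool list \<Rightarrow> bool list \<Rightarrow> bool" where
  "never_above L L2 \<longleftrightarrow> (\<forall>k \<le> length L. ht L k \<le> ht L2 k)"

text \<open>[P,Q] connected: P and Q meet only at (0,0) and (m,r).\<close>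
definition connected_region :: "nat \<Rightarrow> nat \<Rightarrow> bool list \<Rightarrow> bool list \<Rightarrow> bool" where
  "connected_region m r P Q \<longleftrightarrow>
     (\<forall>k i. (k - ht P k, ht P k) = (i - ht Q i, ht Q i) \<and> k \<le> m + r \<and> i \<le> m + r
        \<longrightarrow> (k = 0 \<and> i = 0) \<or> (k = m + r \<and> i = m + r))"

definition region_paths :: "nat \<Rightarrow> nat \<Rightarrow> bool list \<Rightarrow> bool list \<Rightarrow> bool list set" where
  "region_paths m r P Q = {L. lpath m r L \<and> never_above P L \<and> never_above L Q}"

definition path_of :: "nat \<Rightarrow> nat set \<Rightarrow> bool list" where
  "path_of n B = map (\<lambda>i. Suc i \<in> B) [0..<n]"

definition lpm_bases :: "nat \<Rightarrow> nat \<Rightarrow> bool list \<Rightarrow> bool list \<Rightarrow> nat set set" where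
  "lpm_bases m r P Q =
     {B. B \<subseteq> {1..m+r} \<and> card B = r \<and> path_of (m + r) B \<in> region_paths m r P Q}"

text \<open>Matroid polytope in R^{m+r}; coordinates are labelled through a bijection
  idx : {1..m+r} \<rightarrow> 'n, so that e_b is the basis vector of coordinate idx b.\<close>
definition lpm_polytope :: "(nat \<Rightarrow> 'n::finite) \<Rightarrow> nat \<Rightarrow> nat \<Rightarrow> bool list \<Rightarrow> bool list \<Rightarrow> (real ^ 'n) set" where
  "lpm_polytope idx m r P Q =
     convex hull ((\<lambda>B. (\<chi> j. if j \<in> idx ` B then 1 else 0)) ` lpm_bases m r P Q)"

definition edges :: "'a::euclidean_space set \<Rightarrow> 'a set set" where
  "edges K = {F. F face_of K \<and> aff_dim F = 1}"

text \<open>Intersection points of P and L, as step indices k (the point after k steps).\<close>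
definition isect :: "bool list \<Rightarrow> bool list \<Rightarrow> nat set" where
  "isect P L = {k. k \<le> length L \<and> ht P k = ht L k}"

text \<open>L' = L'(P,L): through all intersection points of P and L; between consecutive
  intersection points (x,y) and (x+a,y+b) it consists of E^a N^b.
  Step i (0-based) lies between k1 = last intersection \<le> i and k2 = next
  intersection > i; a = number of E steps of L between them.\<close>
definition Lprime :: "bool list \<Rightarrow> bool list \<Rightarrow> bool list" where
  "Lprime P L = map (\<lambda>i.
      let k1 = Max {k \<in> isect P L. k \<le> i};
          k2 = Min {k \<in> isect P L. i < k};
          a = (k2 - k1) - (ht L k2 - ht L k1)
      in a \<le> i - k1) [0..<length L]"

text \<open>Unit boxes [i,i+1]x[j,j+1] lying below the path L (under its E step at column i).\<close>
definition boxes_below :: "bool list \<Rightarrow> (nat \<times> nat) set" where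
  "boxes_below L = {(i, j). \<exists>k < length L. \<not> L ! k \<and> k - ht L k = i \<and> j < ht L k}"

definition area :: "bool list \<Rightarrow> bool list \<Rightarrow> nat" where
  "area L1 L2 = card (boxes_below L2 - boxes_below L1)"

end

theory Submission
  imports Defs
begin

text \<open>Every edge of a 0/1-polytope is a segment between two vertices, and it contains no other
  chord's midpoint. For the bases of a lattice path matroid, two bases \<open>B1, B2\<close> with
  \<open>|B1 - B2| \<ge> 2\<close> admit a double exchange: where the paths cross, moving a North step of the
  upper path to an East step of the lower one and back yields two new bases with the same
  indicator sum. Hence the edges are exactly the segments between bases that differ by a single
  exchange \<open>x \<mapsto> y\<close>, each counted once when oriented so that \<open>x < y\<close>. For the basis of a path
  \<open>L\<close> such an exchange moves a North step of \<open>L\<close> to a later East step, and it stays in the region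
  exactly when \<open>L\<close> does not touch \<open>P\<close> in between. These moves correspond bijectively to the
  boxes between \<open>L'(P, L)\<close> and \<open>L\<close>: the box in the column of the East step and the row of the
  North step.\<close>

section \<open>Edges of 0/1-polytopes\<close>

definition zero_one :: "real ^ 'n \<Rightarrow> bool" where
  "zero_one v \<longleftrightarrow> (\<forall>k. v $ k = 0 \<or> v $ k = 1)"

lemma zero_one_in_affine_hull_2:
  assumes "zero_one u" "zero_one v" "zero_one w" "v \<noteq> w" "u \<in> affine hull {v, w}"
  shows "u = v \<or> u = w"
proof -
  obtain s t where st: "s + t = 1" "u = s *\<^sub>R v + t *\<^sub>R w"
    using assms(5) unfolding affine_hull_2 by blast
  obtain k where k: "v $ k \<noteq> w $ k"
    using assms(4) by (auto simp: vec_eq_iff)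
  then have "v $ k = 0 \<and> w $ k = 1 \<or> v $ k = 1 \<and> w $ k = 0"
    using assms(2,3) unfolding zero_one_def by metis
  moreover have "u $ k = 0 \<or> u $ k = 1"
    using assms(1) by (simp add: zero_one_def)
  moreover have "u $ k = s * v $ k + t * w $ k"
    using st by simp
  ultimately have "t = 0 \<or> t = 1"
    using st(1) by auto
  then show ?thesis
  proof
    assume "t = 0"
    then show ?thesis
      using st by simp
  next
    assume "t = 1"
    then show ?thesis
      using st by simp
  qed
qed

lemma edge_of_zero_one_hull:
  fixes V :: "(real ^ 'n) set"
  assumes V: "finite V" "\<forall>v\<in>V. zero_one v" and F: "F face_of convex hull V" "aff_dim F = 1"
  obtains v w where "v \<in> V" "w \<in> V" "v \<noteq> w" "F = closed_segment v w"
proof -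
  obtain S where S: "S \<subseteq> V" "F = convex hull S"
    using face_of_convex_hull_subset[OF finite_imp_compact[OF V(1)] F(1)] by blast
  have "\<not> (S = {} \<or> (\<exists>v. S = {v}))"
    using F(2) S(2) by auto
  then obtain v w where vw: "v \<in> S" "w \<in> S" "v \<noteq> w"
    by blast
  then have "affine hull {v, w} \<subseteq> affine hull F"
    using S(2) by (intro hull_mono) (simp add: hull_inc)
  moreover have "aff_dim (affine hull {v, w}) = aff_dim (affine hull F)"
    using vw(3) F(2) by (simp add: aff_dim_affine_hull aff_dim_2)
  ultimately have line: "affine hull {v, w} = affine hull F"
    using affine_dim_equal[of "affine hull {v, w}" "affine hull F"] by simp
  have "S \<subseteq> {v, w}"
  proof
    fix u assume u: "u \<in> S"
    then have "u \<in> affine hull {v, w}"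
      using S(2) line by (simp add: hull_inc)
    then show "u \<in> {v, w}"
      using zero_one_in_affine_hull_2[of u v w] S(1) V(2) u vw by blast
  qed
  then have "S = {v, w}"
    using vw by blast
  then have "F = closed_segment v w"
    using S(2) by (simp add: segment_convex_hull)
  then show ?thesis
    using that S(1) vw by blast
qed

lemma exposed_segment_face_of:
  fixes V :: "(real ^ 'n) set"
  assumes "finite V" "v \<in> V" "w \<in> V"
    and le: "\<forall>x\<in>V. c \<bullet> x \<le> M" and eq: "\<forall>x\<in>V. c \<bullet> x = M \<longleftrightarrow> x = v \<or> x = w"
  shows "closed_segment v w face_of convex hull V"
proof -
  let ?T = "convex hull V \<inter> {x. c \<bullet> x = M}"
  have "convex hull V \<subseteq> {x. c \<bullet> x \<le> M}"
    using le by (intro hull_minimal) (auto simp: convex_halfspace_le)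
  then have T: "?T face_of convex hull V"
    by (intro face_of_Int_supporting_hyperplane_le) auto
  obtain S where S: "S \<subseteq> V" "?T = convex hull S"
    using face_of_convex_hull_subset[OF finite_imp_compact[OF assms(1)] T] by blast
  have "S \<subseteq> {v, w}"
    using S eq hull_subset[of S convex] by blast
  then have "?T \<subseteq> convex hull {v, w}"
    unfolding S(2) by (rule hull_mono)
  moreover have "{v, w} \<subseteq> ?T"
    using assms(2,3) eq by (auto simp: hull_inc)
  then have "convex hull {v, w} \<subseteq> ?T"
    using face_of_imp_convex[OF T] by (intro hull_minimal)
  ultimately show ?thesis
    using T by (simp add: segment_convex_hull)
qed

lemma zero_one_edge_midpoint:
  fixes V :: "(real ^ 'n) set"
  assumes F: "closed_segment v w face_of convex hull V" and V: "\<forall>x\<in>V. zero_one x"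
    and "v \<in> V" "w \<in> V" "v' \<in> V" "w' \<in> V" "v \<noteq> w" and sum: "v + w = v' + w'"
  shows "v' = v \<or> v' = w"
proof -
  have mid: "midpoint v w = midpoint v' w'"
    using sum by (simp add: midpoint_def)
  have "v' \<in> closed_segment v w"
  proof (cases "v' = w'")
    case True
    then show ?thesis
      using mid by (metis midpoint_idem midpoint_in_closed_segment)
  next
    case False
    then have "midpoint v w \<in> open_segment v' w'"
      using mid by simp
    moreover have "v' \<in> convex hull V" "w' \<in> convex hull V"
      using assms by (simp_all add: hull_inc)
    ultimately show ?thesis
      using F midpoint_in_closed_segment[of v w] unfolding face_of_def by blast
  qed
  then have "v' \<in> affine hull {v, w}"
    using convex_hull_subset_affine_hull[of "{v, w}"] by (auto simp: segment_convex_hull)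
  then show ?thesis
    using zero_one_in_affine_hull_2[of v' v w] V assms by blast
qed

lemma card_Diff_commute:
  assumes "finite A" "finite B" "card A = card B"
  shows "card (A - B) = card (B - A)"
  using assms card_Diff_subset_Int[of A B] card_Diff_subset_Int[of B A] by (simp add: Int_commute)

lemma Diff_singletons_of_card_Diff_le_1:
  assumes "finite A" "finite B" "card A = card B" "A \<noteq> B" "card (A - B) \<le> 1"
  obtains x y where "A - B = {x}" "B - A = {y}"
proof -
  have "A - B \<noteq> {}"
    using assms(2-4) card_subset_eq[of B A] by auto
  then have "card (A - B) \<noteq> 0"
    using assms(1) by simp
  then have "card (A - B) = 1" "card (B - A) = 1"
    using assms(5) card_Diff_commute[OF assms(1-3)] by linarith+
  then show ?thesis
    using that by (metis card_1_singletonE)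
qed

definition down_exchanges :: "nat set set \<Rightarrow> nat set \<Rightarrow> nat set set" where
  "down_exchanges Bs B = {B' \<in> Bs. \<exists>x y. B - B' = {x} \<and> B' - B = {y} \<and> x < y}"

definition indicator_vec :: "(nat \<Rightarrow> 'n::finite) \<Rightarrow> nat set \<Rightarrow> real ^ 'n" where
  "indicator_vec idx B = (\<chi> j. if j \<in> idx ` B then 1 else 0)"

lemma zero_one_indicator_vec: "zero_one (indicator_vec idx B)"
  by (simp add: zero_one_def indicator_vec_def)

lemma card_Int_extensions_le:
  assumes "finite B" "finite S" "card B = card S + 1"
  shows "card (insert x (insert y S) \<inter> B) + card (S \<inter> B) \<le> 2 * card S + 1"
  using assms card_mono[of B "insert x (insert y S) \<inter> B"] card_mono[of S "S \<inter> B"] by simp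

lemma card_Int_extensions_eq_iff:
  assumes fin: "finite B" "finite S" and card: "card B = card S + 1"
    and xy: "x \<notin> S" "y \<notin> S" "x \<noteq> y"
  shows "card (insert x (insert y S) \<inter> B) + card (S \<inter> B) = 2 * card S + 1 \<longleftrightarrow>
    B = insert x S \<or> B = insert y S"
proof
  let ?U = "insert x (insert y S)"
  assume eq: "card (?U \<inter> B) + card (S \<inter> B) = 2 * card S + 1"
  have "card (?U \<inter> B) \<le> card B" "card (S \<inter> B) \<le> card S"
    using fin by (simp_all add: card_mono)
  then have "card (?U \<inter> B) = card B" "card (S \<inter> B) = card S"
    using eq card by linarith+
  then have "B \<subseteq> ?U" "S \<subseteq> B"
    using card_subset_eq[OF fin(1), of "?U \<inter> B"] card_subset_eq[OF fin(2), of "S \<inter> B"] by auto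
  moreover have "\<not> (x \<in> B \<and> y \<in> B)"
  proof
    assume "x \<in> B \<and> y \<in> B"
    then have "card ?U \<le> card B"
      using \<open>S \<subseteq> B\<close> fin by (intro card_mono) auto
    then show False
      using card xy fin by simp
  qed
  moreover have "x \<in> B \<or> y \<in> B"
  proof (rule ccontr)
    assume "\<not> (x \<in> B \<or> y \<in> B)"
    then have "card B \<le> card S"
      using \<open>B \<subseteq> ?U\<close> fin by (intro card_mono) auto
    then show False
      using card by simp
  qed
  ultimately show "B = insert x S \<or> B = insert y S"
    by auto
next
  assume "B = insert x S \<or> B = insert y S"
  then have "insert x (insert y S) \<inter> B = B" "S \<inter> B = S"
    by auto
  then show "card (insert x (insert y S) \<inter> B) + card (S \<inter> B) = 2 * card S + 1"
    using card by simp
qed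

definition double_exchange :: "nat set set \<Rightarrow> bool" where
  "double_exchange Bs \<longleftrightarrow> (\<forall>B1 \<in> Bs. \<forall>B2 \<in> Bs. 2 \<le> card (B1 - B2) \<longrightarrow>
    (\<exists>B1' \<in> Bs. \<exists>B2' \<in> Bs. B1' \<inter> B2' = B1 \<inter> B2 \<and> B1' \<union> B2' = B1 \<union> B2 \<and> B1' \<notin> {B1, B2}))"

locale set_family_polytope =
  fixes idx :: "nat \<Rightarrow> 'n::finite" and N r :: nat and Bs :: "nat set set"
  assumes bij: "bij_betw idx {1..N} (UNIV :: 'n set)"
    and Bs_subset: "B \<in> Bs \<Longrightarrow> B \<subseteq> {1..N}" and card_Bs: "B \<in> Bs \<Longrightarrow> card B = r"
begin

abbreviation ivec :: "nat set \<Rightarrow> real ^ 'n" where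
  "ivec \<equiv> indicator_vec idx"

lemma finite_Bs: "finite Bs"
  using Bs_subset finite_subset[of Bs "Pow {1..N}"] by auto

lemma finite_member: "B \<in> Bs \<Longrightarrow> finite B"
  using Bs_subset finite_subset by blast

lemma ivec_nth:
  assumes "B \<subseteq> {1..N}" "b \<in> {1..N}"
  shows "ivec B $ idx b = (if b \<in> B then 1 else 0)"
proof -
  have "idx b \<in> idx ` B \<longleftrightarrow> b \<in> B"
    using assms bij by (auto simp: bij_betw_def dest: inj_onD)
  then show ?thesis
    by (simp add: indicator_vec_def)
qed

lemma idx_vec_eqI:
  fixes u v :: "real ^ 'n"
  assumes "\<And>b. b \<in> {1..N} \<Longrightarrow> u $ idx b = v $ idx b"
  shows "u = v"
  using assms bij unfolding vec_eq_iff bij_betw_def by (metis UNIV_I imageE)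

lemma ivec_inj:
  assumes "A \<subseteq> {1..N}" "B \<subseteq> {1..N}" "ivec A = ivec B"
  shows "A = B"
proof -
  have "b \<in> A \<longleftrightarrow> b \<in> B" if "b \<in> {1..N}" for b
    using ivec_nth[OF assms(1) that] ivec_nth[OF assms(2) that] assms(3) by (auto split: if_splits)
  then show ?thesis
    using assms(1,2) by blast
qed

lemma ivec_add_eq:
  assumes "A \<subseteq> {1..N}" "B \<subseteq> {1..N}" "C \<subseteq> {1..N}" "D \<subseteq> {1..N}"
    and "A \<inter> B = C \<inter> D" "A \<union> B = C \<union> D"
  shows "ivec A + ivec B = ivec C + ivec D"
proof (rule idx_vec_eqI)
  fix b assume "b \<in> {1..N}"
  moreover have "(b \<in> A \<and> b \<in> B \<longleftrightarrow> b \<in> C \<and> b \<in> D) \<and> (b \<in> A \<or> b \<in> B \<longleftrightarrow> b \<in> C \<or> b \<in> D)"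
    using assms(5,6) by blast
  ultimately show "(ivec A + ivec B) $ idx b = (ivec C + ivec D) $ idx b"
    using assms(1-4) by (auto simp: ivec_nth)
qed

lemma inner_ivec:
  assumes "A \<subseteq> {1..N}" "B \<subseteq> {1..N}"
  shows "ivec A \<bullet> ivec B = real (card (A \<inter> B))"
proof -
  have "ivec A \<bullet> ivec B = (\<Sum>b\<in>{1..N}. ivec A $ idx b * ivec B $ idx b)"
    unfolding inner_vec_def using sum.reindex_bij_betw[OF bij, of "\<lambda>i. ivec A $ i * ivec B $ i"] by simp
  also have "\<dots> = (\<Sum>b\<in>{1..N}. if b \<in> A \<inter> B then 1 else 0)"
    using assms by (intro sum.cong) (auto simp: ivec_nth)
  also have "\<dots> = real (card ({1..N} \<inter> (A \<inter> B)))"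
    using sum.inter_restrict[of "{1..N}" "\<lambda>_. 1::real" "A \<inter> B"] by simp
  also have "{1..N} \<inter> (A \<inter> B) = A \<inter> B"
    using assms by auto
  finally show ?thesis .
qed

text \<open>The functional \<open>\<langle>ivec (B1 \<union> B2) + ivec (B1 \<inter> B2), -\<rangle>\<close> exposes the segment.\<close>

lemma exchange_segment_face_of:
  assumes B: "B1 \<in> Bs" "B2 \<in> Bs" and xy: "B1 - B2 = {x}" "B2 - B1 = {y}"
  shows "closed_segment (ivec B1) (ivec B2) face_of convex hull (ivec ` Bs)"
proof -
  define S where "S = B1 \<inter> B2"
  have S: "x \<notin> S" "y \<notin> S" "x \<noteq> y" "B1 = insert x S" "B2 = insert y S"
    using xy unfolding S_def by auto
  have "finite S"
    using finite_member[OF B(1)] by (simp add: S_def)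
  then have card_S: "card S + 1 = r"
    using card_Bs[OF B(1)] S by simp
  have U_sub: "insert x (insert y S) \<subseteq> {1..N}" "S \<subseteq> {1..N}"
    using Bs_subset[OF B(1)] Bs_subset[OF B(2)] S by auto
  define c where "c = ivec (insert x (insert y S)) + ivec S"
  have c: "c \<bullet> ivec B = real (card (insert x (insert y S) \<inter> B) + card (S \<inter> B))" if "B \<in> Bs" for B
    using inner_ivec[OF U_sub(1) Bs_subset[OF that]] inner_ivec[OF U_sub(2) Bs_subset[OF that]]
    by (simp add: c_def inner_add_left)
  have bound: "c \<bullet> ivec B \<le> real (2 * card S + 1)" if "B \<in> Bs" for B
    using c[OF that] card_Int_extensions_le[OF finite_member[OF that] \<open>finite S\<close>, of x y]
      card_Bs[OF that] card_S by simp
  have exposed: "c \<bullet> ivec B = real (2 * card S + 1) \<longleftrightarrow> ivec B = ivec B1 \<or> ivec B = ivec B2"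
    if "B \<in> Bs" for B
  proof -
    have "c \<bullet> ivec B = real (2 * card S + 1) \<longleftrightarrow>
        card (insert x (insert y S) \<inter> B) + card (S \<inter> B) = 2 * card S + 1"
      unfolding c[OF that] of_nat_eq_iff ..
    also have "\<dots> \<longleftrightarrow> B = B1 \<or> B = B2"
      using card_Int_extensions_eq_iff[OF finite_member[OF that] \<open>finite S\<close> _ S(1-3)]
        card_Bs[OF that] card_S S(4,5) by simp
    also have "\<dots> \<longleftrightarrow> ivec B = ivec B1 \<or> ivec B = ivec B2"
      using ivec_inj[OF Bs_subset[OF that] Bs_subset[OF B(1)]]
        ivec_inj[OF Bs_subset[OF that] Bs_subset[OF B(2)]] by blast
    finally show ?thesis .
  qed
  show ?thesis
    using finite_Bs B bound exposed by (intro exposed_segment_face_of) auto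
qed

abbreviation exchange_segment :: "nat set \<times> nat set \<Rightarrow> (real ^ 'n) set" where
  "exchange_segment \<equiv> \<lambda>(B1, B2). closed_segment (ivec B1) (ivec B2)"

lemma exchange_segment_in_edges:
  assumes "(B1, B2) \<in> Sigma Bs (down_exchanges Bs)"
  shows "closed_segment (ivec B1) (ivec B2) \<in> edges (convex hull (ivec ` Bs))"
proof -
  obtain x y where B: "B1 \<in> Bs" "B2 \<in> Bs" "B1 - B2 = {x}" "B2 - B1 = {y}"
    using assms by (auto simp: down_exchanges_def)
  then have "ivec B1 \<noteq> ivec B2"
    using ivec_inj[OF Bs_subset Bs_subset] by blast
  then show ?thesis
    using exchange_segment_face_of[OF B] by (simp add: edges_def aff_dim_convex_hull segment_convex_hull)
qed

text \<open>A double exchange would make the midpoint of the edge the midpoint of a second chord.\<close>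

lemma edge_card_Diff_le_1:
  assumes exchange: "double_exchange Bs" and B: "B1 \<in> Bs" "B2 \<in> Bs" "ivec B1 \<noteq> ivec B2"
    and face: "closed_segment (ivec B1) (ivec B2) face_of convex hull (ivec ` Bs)"
  shows "card (B1 - B2) \<le> 1"
proof (rule ccontr)
  assume "\<not> card (B1 - B2) \<le> 1"
  then have "\<exists>B1' \<in> Bs. \<exists>B2' \<in> Bs. B1' \<inter> B2' = B1 \<inter> B2 \<and> B1' \<union> B2' = B1 \<union> B2 \<and> B1' \<notin> {B1, B2}"
    using exchange B(1,2) unfolding double_exchange_def by simp
  then obtain B1' B2' where B': "B1' \<in> Bs" "B2' \<in> Bs" "B1' \<inter> B2' = B1 \<inter> B2"
    "B1' \<union> B2' = B1 \<union> B2" "B1' \<notin> {B1, B2}"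
    by blast
  have V: "\<forall>v \<in> ivec ` Bs. zero_one v"
    using zero_one_indicator_vec by blast
  have "ivec B1 + ivec B2 = ivec B1' + ivec B2'"
    using ivec_add_eq[OF Bs_subset[OF B(1)] Bs_subset[OF B(2)] Bs_subset[OF B'(1)] Bs_subset[OF B'(2)]
        B'(3,4)[symmetric]] .
  then have "ivec B1' = ivec B1 \<or> ivec B1' = ivec B2"
    by (rule zero_one_edge_midpoint[OF face V imageI[OF B(1)] imageI[OF B(2)]
        imageI[OF B'(1)] imageI[OF B'(2)] B(3)])
  then show False
    using B'(5) ivec_inj[OF Bs_subset[OF B'(1)] Bs_subset[OF B(1)]]
      ivec_inj[OF Bs_subset[OF B'(1)] Bs_subset[OF B(2)]] by blast
qed

lemma edge_is_exchange_segment: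
  assumes exchange: "double_exchange Bs" and F: "F \<in> edges (convex hull (ivec ` Bs))"
  shows "F \<in> exchange_segment ` Sigma Bs (down_exchanges Bs)"
proof -
  have V: "finite (ivec ` Bs)" "\<forall>v \<in> ivec ` Bs. zero_one v"
    using finite_Bs zero_one_indicator_vec by auto
  have face: "F face_of convex hull (ivec ` Bs)" "aff_dim F = 1"
    using F by (simp_all add: edges_def)
  obtain v w where vw: "v \<in> ivec ` Bs" "w \<in> ivec ` Bs" "v \<noteq> w" "F = closed_segment v w"
    using edge_of_zero_one_hull[OF V face] by blast
  obtain B1 B2 where B12: "B1 \<in> Bs" "B2 \<in> Bs" "v = ivec B1" "w = ivec B2"
    using vw(1,2) by blast
  then have B: "B1 \<in> Bs" "B2 \<in> Bs" "ivec B1 \<noteq> ivec B2"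
    and F_eq: "F = closed_segment (ivec B1) (ivec B2)"
    using vw(3,4) by simp_all
  have "card (B1 - B2) \<le> 1"
    using edge_card_Diff_le_1[OF exchange B] face(1) F_eq by simp
  moreover have "finite B1" "finite B2" "card B1 = card B2" "B1 \<noteq> B2"
    using B finite_member card_Bs by auto
  ultimately obtain x y where xy: "B1 - B2 = {x}" "B2 - B1 = {y}"
    using Diff_singletons_of_card_Diff_le_1[of B1 B2] by blast
  then have "x \<noteq> y"
    by blast
  then consider "x < y" | "y < x"
    by linarith
  then show ?thesis
  proof cases
    case 1
    then have "(B1, B2) \<in> Sigma Bs (down_exchanges Bs)"
      using B xy by (auto simp: down_exchanges_def)
    then show ?thesis
      by (rule rev_image_eqI) (simp add: F_eq)
  next
    case 2
    then have "(B2, B1) \<in> Sigma Bs (down_exchanges Bs)"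
      using B xy by (auto simp: down_exchanges_def)
    then show ?thesis
      by (rule rev_image_eqI) (simp add: F_eq closed_segment_commute)
  qed
qed

lemma inj_on_exchange_segment: "inj_on exchange_segment (Sigma Bs (down_exchanges Bs))"
proof (rule inj_onI)
  fix p q assume p: "p \<in> Sigma Bs (down_exchanges Bs)" and q: "q \<in> Sigma Bs (down_exchanges Bs)"
    and eq: "exchange_segment p = exchange_segment q"
  obtain B1 B2 C1 C2 where pq: "p = (B1, B2)" "q = (C1, C2)"
    by fastforce
  obtain x y x' y' where xy: "B1 - B2 = {x}" "B2 - B1 = {y}" "x < y"
    and xy': "C1 - C2 = {x'}" "C2 - C1 = {y'}" "x' < y'"
    using p q pq by (auto simp: down_exchanges_def)
  have subs: "B1 \<subseteq> {1..N}" "B2 \<subseteq> {1..N}" "C1 \<subseteq> {1..N}" "C2 \<subseteq> {1..N}"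
    using p q pq Bs_subset by (auto simp: down_exchanges_def)
  have "ivec B1 = ivec C1 \<and> ivec B2 = ivec C2 \<or> ivec B1 = ivec C2 \<and> ivec B2 = ivec C1"
    using eq pq by (simp add: doubleton_eq_iff)
  then have "B1 = C1 \<and> B2 = C2 \<or> B1 = C2 \<and> B2 = C1"
    using ivec_inj subs by blast
  moreover have "\<not> (B1 = C2 \<and> B2 = C1)"
    using xy xy' by auto
  ultimately show "p = q"
    using pq by blast
qed

lemma card_edges_eq_sum_down_exchanges:
  assumes "double_exchange Bs"
  shows "card (edges (convex hull (ivec ` Bs))) = (\<Sum>B\<in>Bs. card (down_exchanges Bs B))"
proof -
  have "edges (convex hull (ivec ` Bs)) = exchange_segment ` Sigma Bs (down_exchanges Bs)"
    using edge_is_exchange_segment[OF assms] exchange_segment_in_edges by auto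
  then have "card (edges (convex hull (ivec ` Bs))) = card (Sigma Bs (down_exchanges Bs))"
    using card_image[OF inj_on_exchange_segment] by simp
  also have "\<dots> = (\<Sum>B\<in>Bs. card (down_exchanges Bs B))"
    using finite_Bs by (intro card_SigmaI) (auto simp: down_exchanges_def intro: finite_subset)
  finally show ?thesis .
qed

end

section \<open>Lattice paths\<close>

lemma ht_0 [simp]: "ht L 0 = 0"
  by (simp add: ht_def)

lemma ht_Suc: "ht L (Suc k) = ht L k + (if k < length L \<and> L ! k then 1 else 0)"
  unfolding ht_def by (cases "k < length L") (auto simp add: take_Suc_conv_app_nth)

lemma ht_le: "ht L k \<le> k"
  unfolding ht_def by (metis length_filter_le length_take min.bounded_iff)

lemma ht_mono: "k \<le> k' \<Longrightarrow> ht L k \<le> ht L k'"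
  by (induction k' rule: dec_induct) (auto simp: ht_Suc)

lemma ht_le_add_diff: "k \<le> k' \<Longrightarrow> ht L k' \<le> ht L k + (k' - k)"
  by (induction k' rule: dec_induct) (auto simp: ht_Suc)

lemma ht_less_if_North: "i < k \<Longrightarrow> i < length L \<Longrightarrow> L ! i \<Longrightarrow> ht L i < ht L k"
  using ht_Suc[of L i] ht_mono[of "Suc i" k L] by simp

lemma ht_list_update:
  assumes "p < length L"
  shows "ht (L[p := v]) k =
    ht L k + (if p < k \<and> \<not> L ! p \<and> v then 1 else 0) - (if p < k \<and> L ! p \<and> \<not> v then 1 else 0)"
proof (induction k)
  case (Suc k)
  show ?case
  proof (cases "k = p")
    case True
    then show ?thesis
      using Suc.IH assms by (cases v; cases "L ! p") (simp_all add: ht_Suc)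
  next
    case False
    have "p < k \<Longrightarrow> L ! p \<Longrightarrow> 1 \<le> ht L k"
      using assms ht_less_if_North[of p k L] by simp
    then show ?thesis
      using Suc.IH False by (cases "p < k"; cases v; cases "L ! p") (simp_all add: ht_Suc)
  qed
qed simp

lemma list_eq_if_ht_eq:
  assumes "length L1 = length L2" "\<forall>k \<le> length L1. ht L1 k = ht L2 k"
  shows "L1 = L2"
proof (rule nth_equalityI)
  fix i assume "i < length L1"
  then show "L1 ! i = L2 ! i"
    using assms ht_Suc[of L1 i] ht_Suc[of L2 i] by (auto split: if_splits)
qed (fact assms(1))

definition east :: "bool list \<Rightarrow> nat \<Rightarrow> nat" where
  "east L k = k - ht L k"

lemma east_Suc: "east L (Suc k) = east L k + (if k < length L \<and> L ! k then 0 else 1)"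
  unfolding east_def using ht_Suc[of L k] ht_le[of L k] by auto

lemma east_mono: "k \<le> k' \<Longrightarrow> east L k \<le> east L k'"
  by (induction k' rule: dec_induct) (auto simp: east_Suc)

lemma east_less_if_East: "j < k \<Longrightarrow> j < length L \<Longrightarrow> \<not> L ! j \<Longrightarrow> east L j < east L k"
  using east_Suc[of L j] east_mono[of "Suc j" k L] by simp

lemma boxes_below_iff:
  "(x, y) \<in> boxes_below L \<longleftrightarrow> (\<exists>k < length L. \<not> L ! k \<and> east L k = x \<and> y < ht L k)"
  by (auto simp: boxes_below_def east_def)

lemma region_pathsD:
  assumes "L \<in> region_paths m r P Q" "lpath m r P"
  shows "length L = m + r" "ht L (m + r) = r"
    "\<And>k. k \<le> m + r \<Longrightarrow> ht P k \<le> ht L k" "\<And>k. k \<le> m + r \<Longrightarrow> ht L k \<le> ht Q k"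
  using assms by (auto simp: region_paths_def lpath_def never_above_def)

text \<open>Positions are 1-based, as in \<open>path_of\<close>.\<close>

definition north_set :: "bool list \<Rightarrow> nat set" where
  "north_set L = {Suc i | i. i < length L \<and> L ! i}"

lemma length_path_of [simp]: "length (path_of n B) = n"
  by (simp add: path_of_def)

lemma path_of_north_set: "path_of (length L) (north_set L) = L"
  by (rule nth_equalityI) (auto simp: path_of_def north_set_def)

lemma north_set_path_of:
  assumes "B \<subseteq> {1..n}"
  shows "north_set (path_of n B) = B"
proof
  show "north_set (path_of n B) \<subseteq> B"
    by (auto simp: north_set_def path_of_def)
  show "B \<subseteq> north_set (path_of n B)"
  proof
    fix b assume b: "b \<in> B"
    with assms have "1 \<le> b" "b \<le> n"
      by auto
    then have "b = Suc (b - 1)" "b - 1 < n"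
      by auto
    moreover have "path_of n B ! (b - 1)"
      using b \<open>b - 1 < n\<close> \<open>b = Suc (b - 1)\<close> by (simp add: path_of_def)
    ultimately show "b \<in> north_set (path_of n B)"
      unfolding north_set_def by (metis (mono_tags, lifting) length_path_of mem_Collect_eq)
  qed
qed

lemma north_set_subset: "north_set L \<subseteq> {1..length L}"
  by (auto simp: north_set_def)

lemma card_north_set: "card (north_set L) = ht L (length L)"
proof -
  have "north_set L = Suc ` {i. i < length L \<and> L ! i}"
    by (auto simp: north_set_def)
  then have "card (north_set L) = card {i. i < length L \<and> L ! i}"
    by (simp add: card_image)
  also have "\<dots> = ht L (length L)"
    by (simp add: ht_def length_filter_conv_card)
  finally show ?thesis .
qed

lemma north_set_inj: "length L1 = length L2 \<Longrightarrow> north_set L1 = north_set L2 \<Longrightarrow> L1 = L2"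
  by (metis path_of_north_set)

lemma inj_on_north_set_region_paths: "inj_on north_set (region_paths m r P Q)"
proof (rule inj_onI)
  fix L1 L2 assume "L1 \<in> region_paths m r P Q" "L2 \<in> region_paths m r P Q"
    and "north_set L1 = north_set L2"
  then show "L1 = L2"
    by (intro north_set_inj) (simp_all add: region_paths_def lpath_def)
qed

lemma lpm_bases_eq_north_sets: "lpm_bases m r P Q = north_set ` region_paths m r P Q"
proof
  show "lpm_bases m r P Q \<subseteq> north_set ` region_paths m r P Q"
  proof
    fix B assume "B \<in> lpm_bases m r P Q"
    then have "B = north_set (path_of (m + r) B)" "path_of (m + r) B \<in> region_paths m r P Q"
      by (auto simp: lpm_bases_def north_set_path_of)
    then show "B \<in> north_set ` region_paths m r P Q"
      by blast
  qed
  show "north_set ` region_paths m r P Q \<subseteq> lpm_bases m r P Q"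
  proof
    fix B assume "B \<in> north_set ` region_paths m r P Q"
    then obtain L where L: "L \<in> region_paths m r P Q" "B = north_set L"
      by blast
    then have "length L = m + r" "ht L (m + r) = r"
      by (auto simp: region_paths_def lpath_def)
    with L show "B \<in> lpm_bases m r P Q"
      using north_set_subset[of L] card_north_set[of L] path_of_north_set[of L]
      by (auto simp: lpm_bases_def)
  qed
qed

lemma lpm_basesD: "B \<in> lpm_bases m r P Q \<Longrightarrow> B \<subseteq> {1..m+r} \<and> card B = r"
  by (simp add: lpm_bases_def)

lemma North_step_at_height:
  assumes "a \<le> b" "ht L a \<le> y" "y < ht L b"
  obtains i where "a \<le> i" "i < b" "i < length L" "L ! i" "ht L i = y"
  using assms
proof (induction b rule: dec_induct)
  case (step b)
  show ?case
  proof (cases "y < ht L b")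
    case True
    then show ?thesis
      using step.IH step.prems(1) step.prems(2) by (meson less_SucI)
  next
    case False
    then have "b < length L" "L ! b" "ht L b = y"
      using step.prems(3) ht_Suc[of L b] by (auto split: if_splits)
    then show ?thesis
      using step.prems(1) step.hyps(1) by blast
  qed
qed simp

definition swap_down :: "bool list \<Rightarrow> nat \<Rightarrow> nat \<Rightarrow> bool list" where
  "swap_down L i j = L[i := False, j := True]"

definition swap_up :: "bool list \<Rightarrow> nat \<Rightarrow> nat \<Rightarrow> bool list" where
  "swap_up L i j = L[i := True, j := False]"

lemma length_swap_down [simp]: "length (swap_down L i j) = length L"
  by (simp add: swap_down_def)

lemma length_swap_up [simp]: "length (swap_up L i j) = length L"
  by (simp add: swap_up_def)

lemma ht_swap_down:
  assumes "i < j" "j < length L" "L ! i" "\<not> L ! j"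
  shows "ht (swap_down L i j) k = ht L k - (if i < k \<and> k \<le> j then 1 else 0)"
proof -
  have "ht (L[i := False]) k' = ht L k' - (if i < k' then 1 else 0)" for k'
    using ht_list_update[of i L False k'] assms by simp
  moreover have "ht (L[i := False, j := True]) k = ht (L[i := False]) k + (if j < k then 1 else 0)"
    using ht_list_update[of j "L[i := False]" True k] assms by simp
  moreover have "i < k \<Longrightarrow> 1 \<le> ht L k"
    using ht_less_if_North[of i k L] assms by simp
  ultimately show ?thesis
    using assms by (auto simp: swap_down_def)
qed

lemma ht_swap_up:
  assumes "i < j" "j < length L" "\<not> L ! i" "L ! j"
  shows "ht (swap_up L i j) k = ht L k + (if i < k \<and> k \<le> j then 1 else 0)"
proof -
  have "ht (L[i := True]) k' = ht L k' + (if i < k' then 1 else 0)" for k'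
    using ht_list_update[of i L True k'] assms by simp
  moreover have "ht (L[i := True, j := False]) k = ht (L[i := True]) k - (if j < k then 1 else 0)"
    using ht_list_update[of j "L[i := True]" False k] assms by simp
  moreover have "j < k \<Longrightarrow> 1 \<le> ht L k"
    using ht_less_if_North[of j k L] assms by simp
  ultimately show ?thesis
    using assms by (auto simp: swap_up_def)
qed

lemma north_set_swap_down:
  assumes "i < j" "j < length L" "L ! i" "\<not> L ! j"
  shows "north_set (swap_down L i j) = north_set L - {Suc i} \<union> {Suc j}"
  using assms by (auto simp: north_set_def swap_down_def nth_list_update)

lemma north_set_swap_up:
  assumes "i < j" "j < length L" "\<not> L ! i" "L ! j"
  shows "north_set (swap_up L i j) = north_set L - {Suc j} \<union> {Suc i}"
  using assms by (auto simp: north_set_def swap_up_def nth_list_update)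

lemma swap_down_in_region_paths_iff:
  assumes L: "L \<in> region_paths m r P Q" and P: "lpath m r P"
    and ij: "i < j" "j < length L" "L ! i" "\<not> L ! j"
  shows "swap_down L i j \<in> region_paths m r P Q \<longleftrightarrow> (\<forall>k. i < k \<and> k \<le> j \<longrightarrow> k \<notin> isect P L)"
proof -
  note F = region_pathsD[OF L P]
  note hs = ht_swap_down[OF ij]
  have lowered: "ht (swap_down L i j) k < ht L k" if "i < k" "k \<le> j" for k
    using that hs[of k] ht_less_if_North[of i k L] ij by simp
  have "lpath m r (swap_down L i j)" "never_above (swap_down L i j) Q"
    using F ij hs by (auto simp: lpath_def never_above_def intro: le_trans[OF diff_le_self])
  moreover have "never_above P (swap_down L i j) \<longleftrightarrow> (\<forall>k. i < k \<and> k \<le> j \<longrightarrow> k \<notin> isect P L)"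
  proof
    assume above: "never_above P (swap_down L i j)"
    show "\<forall>k. i < k \<and> k \<le> j \<longrightarrow> k \<notin> isect P L"
    proof (intro allI impI)
      fix k assume k: "i < k \<and> k \<le> j"
      then have "ht P k \<le> ht (swap_down L i j) k"
        using above ij(2) F(1) P by (simp add: never_above_def lpath_def)
      then show "k \<notin> isect P L"
        using lowered[of k] k by (auto simp: isect_def)
    qed
  next
    assume "\<forall>k. i < k \<and> k \<le> j \<longrightarrow> k \<notin> isect P L"
    then have "ht P k \<le> ht (swap_down L i j) k" if "k \<le> m + r" for k
      using that F(1) F(3)[of k] hs[of k] by (cases "i < k \<and> k \<le> j") (auto simp: isect_def)
    then show "never_above P (swap_down L i j)"
      using P by (simp add: never_above_def lpath_def)
  qed
  ultimately show ?thesis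
    by (simp add: region_paths_def)
qed

section \<open>Boxes between \<open>L'(P, L)\<close> and \<open>L\<close>\<close>

locale path_pair =
  fixes m r :: nat and P L :: "bool list"
  assumes P: "lpath m r P" and L: "lpath m r L"
begin

abbreviation "n \<equiv> m + r"
abbreviation "I \<equiv> isect P L"
abbreviation "L' \<equiv> Lprime P L"

lemma length_L: "length L = n"
  using L by (simp add: lpath_def)

lemma length_L' [simp]: "length L' = n"
  by (simp add: Lprime_def length_L)

lemma isect_subset: "I \<subseteq> {..n}"
  using length_L by (auto simp: isect_def)

lemma finite_isect: "finite I"
  using isect_subset finite_subset by blast

lemma isect_0: "0 \<in> I"
  by (simp add: isect_def)

lemma isect_n: "n \<in> I"
  using length_L P L by (simp add: isect_def lpath_def)

definition consecutive_isect :: "nat \<Rightarrow> nat \<Rightarrow> bool" where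
  "consecutive_isect k1 k2 \<longleftrightarrow> k1 \<in> I \<and> k2 \<in> I \<and> k1 < k2 \<and> (\<forall>k. k1 < k \<and> k < k2 \<longrightarrow> k \<notin> I)"

definition gap_east :: "nat \<Rightarrow> nat \<Rightarrow> nat" where
  "gap_east k1 k2 = (k2 - k1) - (ht L k2 - ht L k1)"

lemma consecutive_isect_exists:
  assumes "t < n"
  obtains k1 k2 where "consecutive_isect k1 k2" "k1 \<le> t" "t < k2"
proof -
  let ?A = "{k \<in> I. k \<le> t}" and ?B = "{k \<in> I. t < k}"
  have A: "finite ?A" "?A \<noteq> {}" and B: "finite ?B" "?B \<noteq> {}"
    using finite_isect isect_0 isect_n assms by auto
  define k1 where "k1 = Max ?A"
  define k2 where "k2 = Min ?B"
  have "k1 \<in> ?A" "k2 \<in> ?B"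
    unfolding k1_def k2_def using Max_in[OF A] Min_in[OF B] by simp_all
  then have k1: "k1 \<in> I" "k1 \<le> t" and k2: "k2 \<in> I" "t < k2"
    by simp_all
  have "k \<notin> I" if "k1 < k" "k < k2" for k
  proof
    assume "k \<in> I"
    show False
    proof (cases "k \<le> t")
      case True
      then have "k \<le> k1"
        unfolding k1_def using A(1) \<open>k \<in> I\<close> by (simp add: Max_ge)
      then show False
        using that by simp
    next
      case False
      then have "k2 \<le> k"
        unfolding k2_def using B(1) \<open>k \<in> I\<close> by (simp add: Min_le)
      then show False
        using that by simp
    qed
  qed
  then have "consecutive_isect k1 k2"
    using k1 k2 by (simp add: consecutive_isect_def)
  then show ?thesis
    using that k1 k2 by blast
qed

lemma consecutive_isect_unique:
  assumes gap: "consecutive_isect k1 k2" "k1 \<le> t" "t < k2"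
  shows "Max {k \<in> I. k \<le> t} = k1" "Min {k \<in> I. t < k} = k2"
proof -
  have k1: "k1 \<in> I" and k2: "k2 \<in> I" and none: "\<And>k. k1 < k \<Longrightarrow> k < k2 \<Longrightarrow> k \<notin> I"
    using gap(1) by (simp_all add: consecutive_isect_def)
  show "Max {k \<in> I. k \<le> t} = k1"
  proof (rule Max_eqI)
    fix k assume "k \<in> {k \<in> I. k \<le> t}"
    then show "k \<le> k1"
      using none[of k] gap(3) by force
  qed (use k1 gap(2) finite_isect in simp_all)
  show "Min {k \<in> I. t < k} = k2"
  proof (rule Min_eqI)
    fix k assume "k \<in> {k \<in> I. t < k}"
    then show "k2 \<le> k"
      using none[of k] gap(2) by force
  qed (use k2 gap(3) finite_isect in simp_all)
qed

lemma consecutive_isect_le_n: "consecutive_isect k1 k2 \<Longrightarrow> k2 \<le> n"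
  using isect_subset by (auto simp: consecutive_isect_def)

lemma Lprime_nth:
  assumes "consecutive_isect k1 k2" "k1 \<le> t" "t < k2"
  shows "L' ! t \<longleftrightarrow> gap_east k1 k2 \<le> t - k1"
  using assms consecutive_isect_le_n[OF assms(1)] consecutive_isect_unique[OF assms]
  by (simp add: Lprime_def length_L gap_east_def Let_def)

lemma ht_Lprime:
  "t \<le> n \<Longrightarrow> consecutive_isect k1 k2 \<Longrightarrow> k1 \<le> t \<Longrightarrow> t \<le> k2 \<Longrightarrow>
    ht L' t = ht L k1 + (t - k1 - gap_east k1 k2)"
proof (induction t arbitrary: k1 k2)
  case (Suc t)
  obtain k1' k2' where gap: "consecutive_isect k1' k2'" "k1' \<le> t" "t < k2'"
    using consecutive_isect_exists[of t] Suc.prems(1) by auto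
  have ht_step: "ht L' (Suc t) = ht L' t + (if gap_east k1' k2' \<le> t - k1' then 1 else 0)"
    using ht_Suc[of L' t] Suc.prems(1) Lprime_nth[OF gap] by simp
  have IH: "ht L' t = ht L k1' + (t - k1' - gap_east k1' k2')"
    using Suc.IH[OF _ gap(1,2)] gap(3) Suc.prems(1) by simp
  show ?case
  proof (cases "k1 = Suc t")
    case True
    have "k2' = Suc t"
    proof (rule ccontr)
      assume "k2' \<noteq> Suc t"
      then have "k1' < Suc t" "Suc t < k2'"
        using gap by simp_all
      then show False
        using gap(1) True Suc.prems(2) by (simp add: consecutive_isect_def)
    qed
    then have g: "gap_east k1' k2' = (Suc t - k1') - (ht L (Suc t) - ht L k1')"
      by (simp add: gap_east_def)
    have "ht L k1' \<le> ht L (Suc t)" "ht L (Suc t) \<le> ht L k1' + (Suc t - k1')"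
      using gap(2) ht_mono[of k1' "Suc t" L] ht_le_add_diff[of k1' "Suc t" L] by simp_all
    then have "ht L' (Suc t) = ht L (Suc t)"
      using ht_step IH g gap(2) by (cases "ht L (Suc t) = ht L k1'") (simp_all add: Suc_diff_le)
    then show ?thesis
      using True by simp
  next
    case False
    then have "k1 \<le> t" "t < k2"
      using Suc.prems by auto
    then have "k1' = k1" "k2' = k2"
      using consecutive_isect_unique[OF gap] consecutive_isect_unique[OF Suc.prems(2)] by simp_all
    moreover have "Suc t - k1 - gap_east k1 k2 =
        (t - k1 - gap_east k1 k2) + (if gap_east k1 k2 \<le> t - k1 then 1 else 0)"
      using \<open>k1 \<le> t\<close> by (simp add: Suc_diff_le)
    ultimately show ?thesis
      using ht_step IH by simp
  qed
qed simp

lemma Lprime_East: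
  assumes gap: "consecutive_isect k1 k2" "k1 \<le> t" "t < k2" and E: "\<not> L' ! t"
  shows "t - k1 < gap_east k1 k2" "ht L' t = ht L k1" "east L' t = east L k1 + (t - k1)"
proof -
  show lt: "t - k1 < gap_east k1 k2"
    using Lprime_nth[OF gap] E by simp
  show ht: "ht L' t = ht L k1"
    using ht_Lprime[OF _ gap(1,2)] gap consecutive_isect_le_n[OF gap(1)] lt by simp
  show "east L' t = east L k1 + (t - k1)"
    using ht ht_le[of L k1] gap(2) by (simp add: east_def)
qed

lemma east_consecutive_isect: "consecutive_isect k1 k2 \<Longrightarrow> east L k2 = east L k1 + gap_east k1 k2"
  using ht_mono[of k1 k2 L] ht_le_add_diff[of k1 k2 L] ht_le[of L k1]
  by (auto simp: east_def gap_east_def consecutive_isect_def)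

text \<open>By \<open>swap_down_in_region_paths_iff\<close> these are the moves of a North step of \<open>L\<close> to a later
  East step that keep the path in the region.\<close>

definition down_swaps :: "(nat \<times> nat) set" where
  "down_swaps = {(i, j). i < j \<and> j < n \<and> L ! i \<and> \<not> L ! j \<and> (\<forall>k. i < k \<and> k \<le> j \<longrightarrow> k \<notin> I)}"

definition swap_box :: "nat \<times> nat \<Rightarrow> nat \<times> nat" where
  "swap_box p = (east L (snd p), ht L (fst p))"

lemma inj_on_swap_box: "inj_on swap_box down_swaps"
proof (rule inj_onI)
  fix p q assume p: "p \<in> down_swaps" and q: "q \<in> down_swaps" and eq: "swap_box p = swap_box q"
  obtain i j i' j' where pq: "p = (i, j)" "q = (i', j')"
    by fastforce
  have steps: "L ! i" "\<not> L ! j" "L ! i'" "\<not> L ! j'" "i < n" "j < n" "i' < n" "j' < n"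
    using p q pq by (auto simp: down_swaps_def)
  have "east L j = east L j'" "ht L i = ht L i'"
    using eq pq by (auto simp: swap_box_def)
  moreover have "j \<noteq> j' \<Longrightarrow> east L j \<noteq> east L j'"
    using steps length_L east_less_if_East[of j j' L] east_less_if_East[of j' j L]
    by (cases "j < j'") auto
  moreover have "i \<noteq> i' \<Longrightarrow> ht L i \<noteq> ht L i'"
    using steps length_L ht_less_if_North[of i i' L] ht_less_if_North[of i' i L]
    by (cases "i < i'") auto
  ultimately show "p = q"
    using pq by auto
qed

lemma consecutive_isect_east_unique:
  assumes "consecutive_isect k1 k2" "east L k1 \<le> x" "x < east L k2"
    and "consecutive_isect k1' k2'" "east L k1' \<le> x" "x < east L k2'"
  shows "k1 = k1'"
proof (rule ccontr)
  have after: "k2 \<le> k1'" if "consecutive_isect k1 k2" "consecutive_isect k1' k2'" "k1 < k1'" for k1 k2 k1' k2'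
    using that by (auto simp: consecutive_isect_def not_le[symmetric])
  assume "k1 \<noteq> k1'"
  then consider "k1 < k1'" | "k1' < k1"
    by linarith
  then show False
    using after[OF assms(1,4)] after[OF assms(4,1)] east_mono[of k2 k1' L] east_mono[of k2' k1 L] assms
    by cases auto
qed

lemma swap_box_in_area: "swap_box ` down_swaps \<subseteq> boxes_below L - boxes_below L'"
proof
  fix z assume "z \<in> swap_box ` down_swaps"
  then obtain i j where ij: "(i, j) \<in> down_swaps" "z = (east L j, ht L i)"
    by (auto simp: swap_box_def)
  then have steps: "i < j" "j < n" "L ! i" "\<not> L ! j" and no_isect: "\<forall>k. i < k \<and> k \<le> j \<longrightarrow> k \<notin> I"
    by (auto simp: down_swaps_def)
  have "z \<in> boxes_below L"
    using ij(2) steps length_L ht_less_if_North[of i j L] boxes_below_iff by auto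
  moreover have "z \<notin> boxes_below L'"
  proof
    assume "z \<in> boxes_below L'"
    then obtain t where t: "t < n" "\<not> L' ! t" "east L' t = east L j" "ht L i < ht L' t"
      using ij(2) boxes_below_iff by auto
    obtain k1 k2 where gap: "consecutive_isect k1 k2" "k1 \<le> j" "j < k2"
      using consecutive_isect_exists steps(2) by blast
    obtain k1' k2' where gap': "consecutive_isect k1' k2'" "k1' \<le> t" "t < k2'"
      using consecutive_isect_exists t(1) by blast
    note E = Lprime_East[OF gap' t(2)]
    have "east L k1 \<le> east L j" "east L j < east L k2"
      using east_mono[of k1 j L] gap east_less_if_East[of j k2 L] steps length_L by auto
    moreover have "east L k1' \<le> east L j" "east L j < east L k2'"
      using E t(3) east_consecutive_isect[OF gap'(1)] by auto
    ultimately have "k1' = k1"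
      using consecutive_isect_east_unique[OF gap(1) _ _ gap'(1)] by blast
    moreover have "k1 \<le> i"
      using no_isect gap steps(1) by (auto simp: consecutive_isect_def not_le[symmetric])
    ultimately have "ht L' t \<le> ht L i"
      using E(2) ht_mono by simp
    then show False
      using t(4) by simp
  qed
  ultimately show "z \<in> boxes_below L - boxes_below L'"
    by simp
qed

lemma area_subset_swap_box: "boxes_below L - boxes_below L' \<subseteq> swap_box ` down_swaps"
proof
  fix z assume z: "z \<in> boxes_below L - boxes_below L'"
  obtain x y where xy: "z = (x, y)"
    by fastforce
  obtain j where j: "j < n" "\<not> L ! j" "east L j = x" "y < ht L j"
    using z xy boxes_below_iff length_L by auto
  obtain k1 k2 where gap: "consecutive_isect k1 k2" "k1 \<le> j" "j < k2"
    using consecutive_isect_exists j(1) by blast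
  have east_j: "east L k1 \<le> x" "x < east L k2"
    using east_mono[of k1 j L] gap east_less_if_East[of j k2 L] j length_L by auto
  txt \<open>Within the gap, \<open>L'\<close> has an East step in column \<open>x\<close> at height \<open>ht L k1\<close>;
    as the box is not below \<open>L'\<close>, it lies at height at least \<open>ht L k1\<close>.\<close>
  define t where "t = k1 + (x - east L k1)"
  have "t - k1 < gap_east k1 k2"
    using east_j east_consecutive_isect[OF gap(1)] by (simp add: t_def)
  moreover have "gap_east k1 k2 \<le> k2 - k1"
    by (simp add: gap_east_def)
  ultimately have t_gap: "k1 \<le> t" "t < k2"
    by (auto simp: t_def)
  have E: "\<not> L' ! t"
    using Lprime_nth[OF gap(1) t_gap] \<open>t - k1 < gap_east k1 k2\<close> by simp
  have "t < n"
    using t_gap consecutive_isect_le_n[OF gap(1)] by simp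
  moreover have "east L' t = x"
    using Lprime_East(3)[OF gap(1) t_gap E] east_j by (simp add: t_def)
  ultimately have "ht L k1 \<le> y"
    using z xy boxes_below_iff[of x y L'] E Lprime_East(2)[OF gap(1) t_gap E] by auto
  then obtain i where i: "k1 \<le> i" "i < j" "L ! i" "ht L i = y"
    using North_step_at_height[of k1 j L y] gap(2) j(4) by blast
  have "k \<notin> I" if "i < k" "k \<le> j" for k
    using gap(1) i(1) gap(3) that by (simp add: consecutive_isect_def)
  then have "(i, j) \<in> down_swaps"
    using i j by (simp add: down_swaps_def)
  moreover have "swap_box (i, j) = z"
    using xy j(3) i(4) by (simp add: swap_box_def)
  ultimately show "z \<in> swap_box ` down_swaps"
    by (metis image_eqI)
qed

lemma card_down_swaps: "card down_swaps = area L' L"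
proof -
  have "swap_box ` down_swaps = boxes_below L - boxes_below L'"
    using swap_box_in_area area_subset_swap_box by blast
  then show ?thesis
    using card_image[OF inj_on_swap_box] by (simp add: area_def)
qed

end

section \<open>Lattice path matroids\<close>

lemma down_exchange_north_set_cases:
  assumes P: "lpath m r P" and Lr: "L \<in> region_paths m r P Q"
    and B: "B \<in> down_exchanges (lpm_bases m r P Q) (north_set L)"
  obtains i j where "(i, j) \<in> path_pair.down_swaps m r P L" "B = north_set L - {Suc i} \<union> {Suc j}"
proof -
  interpret path_pair m r P L
    using P Lr by unfold_locales (auto simp: region_paths_def)
  obtain x y where B: "B \<in> lpm_bases m r P Q" "north_set L - B = {x}" "B - north_set L = {y}" "x < y"
    using assms(3) unfolding down_exchanges_def by blast
  obtain i where i: "x = Suc i" "i < n" "L ! i"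
    using B(2) length_L by (auto simp: north_set_def)
  have "y \<in> B" "y \<notin> north_set L"
    using B(3) by blast+
  moreover have "y \<in> {1..n}"
    using lpm_basesD[OF B(1)] \<open>y \<in> B\<close> by blast
  ultimately obtain j where j: "y = Suc j" "j < n" "\<not> L ! j"
    using length_L by (cases y) (auto simp: north_set_def)
  have "i < j"
    using B(4) i(1) j(1) by simp
  have B_eq: "B = north_set L - {Suc i} \<union> {Suc j}"
    using B(2,3) i(1) j(1) by blast
  also have "\<dots> = north_set (swap_down L i j)"
    using north_set_swap_down[OF \<open>i < j\<close>] j i length_L by simp
  finally have B_swap: "B = north_set (swap_down L i j)" .
  obtain L2 where L2: "L2 \<in> region_paths m r P Q" "B = north_set L2"
    using B(1) lpm_bases_eq_north_sets by blast
  then have "swap_down L i j = L2"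
    using B_swap north_set_inj[of "swap_down L i j" L2] region_pathsD(1)[OF _ P] length_L by simp
  then have "swap_down L i j \<in> region_paths m r P Q"
    using L2(1) by simp
  then have "(i, j) \<in> down_swaps"
    using swap_down_in_region_paths_iff[OF Lr P \<open>i < j\<close>] \<open>i < j\<close> i j length_L
    by (simp add: down_swaps_def)
  then show ?thesis
    using that B_eq by blast
qed

lemma down_swap_in_down_exchanges:
  assumes P: "lpath m r P" and Lr: "L \<in> region_paths m r P Q"
    and ij: "(i, j) \<in> path_pair.down_swaps m r P L"
  shows "north_set L - {Suc i} \<union> {Suc j} \<in> down_exchanges (lpm_bases m r P Q) (north_set L)"
proof -
  interpret path_pair m r P L
    using P Lr by unfold_locales (auto simp: region_paths_def)
  have steps: "i < j" "j < length L" "L ! i" "\<not> L ! j"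
    using ij length_L by (auto simp: down_swaps_def)
  have "swap_down L i j \<in> region_paths m r P Q"
    using ij swap_down_in_region_paths_iff[OF Lr P steps] by (simp add: down_swaps_def)
  then have "north_set L - {Suc i} \<union> {Suc j} \<in> lpm_bases m r P Q"
    using north_set_swap_down[OF steps] lpm_bases_eq_north_sets by (metis image_eqI)
  moreover have "Suc i \<in> north_set L" "Suc j \<notin> north_set L"
    using steps by (auto simp: north_set_def)
  ultimately show ?thesis
    using steps(1) unfolding down_exchanges_def by auto
qed

lemma down_exchanges_north_set:
  assumes P: "lpath m r P" and Lr: "L \<in> region_paths m r P Q"
  shows "down_exchanges (lpm_bases m r P Q) (north_set L) =
    (\<lambda>(i, j). north_set L - {Suc i} \<union> {Suc j}) ` path_pair.down_swaps m r P L"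
proof
  show "down_exchanges (lpm_bases m r P Q) (north_set L) \<subseteq>
      (\<lambda>(i, j). north_set L - {Suc i} \<union> {Suc j}) ` path_pair.down_swaps m r P L"
  proof
    fix B assume "B \<in> down_exchanges (lpm_bases m r P Q) (north_set L)"
    then obtain i j where "(i, j) \<in> path_pair.down_swaps m r P L" "B = north_set L - {Suc i} \<union> {Suc j}"
      using down_exchange_north_set_cases[OF P Lr] by blast
    then show "B \<in> (\<lambda>(i, j). north_set L - {Suc i} \<union> {Suc j}) ` path_pair.down_swaps m r P L"
      by (simp add: rev_image_eqI)
  qed
  show "(\<lambda>(i, j). north_set L - {Suc i} \<union> {Suc j}) ` path_pair.down_swaps m r P L \<subseteq>
      down_exchanges (lpm_bases m r P Q) (north_set L)"
    using down_swap_in_down_exchanges[OF P Lr] by auto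
qed

lemma card_down_exchanges_north_set:
  assumes P: "lpath m r P" and Lr: "L \<in> region_paths m r P Q"
  shows "card (down_exchanges (lpm_bases m r P Q) (north_set L)) = area (Lprime P L) L"
proof -
  interpret path_pair m r P L
    using P Lr by unfold_locales (auto simp: region_paths_def)
  have "inj_on (\<lambda>(i, j). north_set L - {Suc i} \<union> {Suc j}) down_swaps"
  proof (rule inj_onI, clarify)
    fix i j i' j' assume "(i, j) \<in> down_swaps" "(i', j') \<in> down_swaps"
      and eq: "north_set L - {Suc i} \<union> {Suc j} = north_set L - {Suc i'} \<union> {Suc j'}"
    then have "Suc i \<in> north_set L" "Suc i' \<in> north_set L" "Suc j \<notin> north_set L" "Suc j' \<notin> north_set L" "i < j"
      using length_L by (auto simp: down_swaps_def north_set_def)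
    with eq show "i = i' \<and> j = j'"
      by blast
  qed
  then show ?thesis
    unfolding down_exchanges_north_set[OF P Lr] card_down_swaps[symmetric] by (rule card_image)
qed

lemma strictly_above_stretch:
  assumes len: "length U1 = N" "length U2 = N" and ends: "ht U1 N = ht U2 N"
    and k0: "k0 \<le> N" "ht U2 k0 < ht U1 k0"
  obtains a c where "a < c" "c < N" "\<And>k. a < k \<Longrightarrow> k \<le> c \<Longrightarrow> ht U2 k < ht U1 k"
    "U1 ! a" "\<not> U2 ! a" "\<not> U1 ! c" "U2 ! c"
proof -
  define SA where "SA = {k. k < k0 \<and> ht U1 k \<le> ht U2 k}"
  define SC where "SC = {k. k0 < k \<and> k \<le> N \<and> ht U1 k \<le> ht U2 k}"
  have "k0 \<noteq> 0"
    using k0(2) by (metis ht_0 less_irrefl)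
  moreover have "k0 \<noteq> N"
    using k0(2) ends by auto
  ultimately have "0 \<in> SA" "N \<in> SC"
    using k0(1) ends unfolding SA_def SC_def by simp_all
  moreover have "finite SA" "finite SC"
    unfolding SA_def SC_def by simp_all
  ultimately have SA: "finite SA" "SA \<noteq> {}" and SC: "finite SC" "SC \<noteq> {}"
    by blast+
  define a where "a = Max SA"
  define c' where "c' = Min SC"
  have a: "a < k0" "ht U1 a \<le> ht U2 a"
    using Max_in[OF SA] unfolding a_def SA_def by auto
  have c': "k0 < c'" "c' \<le> N" "ht U1 c' \<le> ht U2 c'"
    using Min_in[OF SC] unfolding c'_def SC_def by auto
  have above: "ht U2 k < ht U1 k" if "a < k" "k < c'" for k
  proof (cases k k0 rule: linorder_cases)
    case less
    then have "k \<notin> SA"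
      using that(1) SA(1) Max_ge a_def not_le by blast
    then show ?thesis
      using less unfolding SA_def by auto
  next
    case greater
    then have "k \<notin> SC"
      using that(2) SC(1) Min_le c'_def not_le by blast
    then show ?thesis
      using greater that c' unfolding SC_def by auto
  qed (use k0 in simp)
  define c where "c = c' - 1"
  have c: "c' = Suc c" "a < c" "c < N"
    using a c' unfolding c_def by auto
  have "ht U2 (Suc a) < ht U1 (Suc a)" "ht U2 c < ht U1 c"
    using above[of "Suc a"] above[of c] a c' c by auto
  then have "U1 ! a" "\<not> U2 ! a" "\<not> U1 ! c" "U2 ! c"
    using a(2) c'(3) c ht_Suc[of U1 a] ht_Suc[of U2 a] ht_Suc[of U1 c] ht_Suc[of U2 c] len
    by (auto split: if_splits)
  then show ?thesis
    using that[of a c] above c by simp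
qed

lemma exchange_region_paths:
  assumes U1: "U1 \<in> region_paths m r P Q" and U2: "U2 \<in> region_paths m r P Q"
    and P: "lpath m r P" and k0: "k0 \<le> m + r" "ht U2 k0 < ht U1 k0"
  obtains a c where "a < c" "c < m + r" "U1 ! a" "\<not> U2 ! a" "\<not> U1 ! c" "U2 ! c"
    "swap_down U1 a c \<in> region_paths m r P Q" "swap_up U2 a c \<in> region_paths m r P Q"
proof -
  note F1 = region_pathsD[OF U1 P] and F2 = region_pathsD[OF U2 P]
  obtain a c where ac: "a < c" "c < m + r" "U1 ! a" "\<not> U2 ! a" "\<not> U1 ! c" "U2 ! c"
    and above: "\<And>k. a < k \<Longrightarrow> k \<le> c \<Longrightarrow> ht U2 k < ht U1 k"
    using strictly_above_stretch[OF F1(1) F2(1) _ k0] F1(2) F2(2) by metis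
  have "\<forall>k. a < k \<and> k \<le> c \<longrightarrow> k \<notin> isect P U1"
  proof (intro allI impI)
    fix k assume "a < k \<and> k \<le> c"
    then have "ht P k < ht U1 k"
      using above[of k] F2(3)[of k] ac(2) by simp
    then show "k \<notin> isect P U1"
      by (simp add: isect_def)
  qed
  then have "swap_down U1 a c \<in> region_paths m r P Q"
    using swap_down_in_region_paths_iff[OF U1 P] ac F1(1) by simp
  moreover have "swap_up U2 a c \<in> region_paths m r P Q"
  proof -
    note ht_up = ht_swap_up[of a c U2, OF ac(1) _ ac(4) ac(6)]
    have "ht (swap_up U2 a c) k \<le> ht Q k" if "k \<le> m + r" for k
      using that ht_up[of k] above[of k] F1(4)[of k] F2(4)[of k] ac(2) F2(1)
      by (cases "a < k \<and> k \<le> c") auto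
    moreover have "ht P k \<le> ht (swap_up U2 a c) k" if "k \<le> m + r" for k
      using that ht_up[of k] F2(3)[of k] ac(2) F2(1) by simp
    ultimately show ?thesis
      using ht_up[of "m + r"] F2 ac(2) P
      by (simp add: region_paths_def lpath_def never_above_def)
  qed
  ultimately show ?thesis
    using that ac by blast
qed

lemma double_exchange_north_sets_above:
  assumes P: "lpath m r P" and U1: "U1 \<in> region_paths m r P Q" and U2: "U2 \<in> region_paths m r P Q"
    and k: "k \<le> m + r" "ht U2 k < ht U1 k" and two: "2 \<le> card (north_set U1 - north_set U2)"
  shows "\<exists>B1' \<in> lpm_bases m r P Q. \<exists>B2' \<in> lpm_bases m r P Q.
    B1' \<inter> B2' = north_set U1 \<inter> north_set U2 \<and> B1' \<union> B2' = north_set U1 \<union> north_set U2 \<and>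
    B1' \<notin> {north_set U1, north_set U2}"
proof -
  obtain a c where ac: "a < c" "c < m + r" "U1 ! a" "\<not> U2 ! a" "\<not> U1 ! c" "U2 ! c"
    and paths: "swap_down U1 a c \<in> region_paths m r P Q" "swap_up U2 a c \<in> region_paths m r P Q"
    using exchange_region_paths[OF U1 U2 P k] by blast
  have len: "length U1 = m + r" "length U2 = m + r"
    using region_pathsD(1)[OF U1 P] region_pathsD(1)[OF U2 P] .
  define B1' where "B1' = north_set U1 - {Suc a} \<union> {Suc c}"
  define B2' where "B2' = north_set U2 - {Suc c} \<union> {Suc a}"
  have "B1' = north_set (swap_down U1 a c)" "B2' = north_set (swap_up U2 a c)"
    using north_set_swap_down[of a c U1] north_set_swap_up[of a c U2] ac len
    by (simp_all add: B1'_def B2'_def)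
  then have "B1' \<in> lpm_bases m r P Q" "B2' \<in> lpm_bases m r P Q"
    using paths by (simp_all add: lpm_bases_eq_north_sets)
  moreover have mem: "Suc a \<in> north_set U1" "Suc a \<notin> north_set U2" "Suc c \<notin> north_set U1" "Suc c \<in> north_set U2"
    using ac len by (auto simp: north_set_def)
  then have "B1' \<inter> B2' = north_set U1 \<inter> north_set U2" "B1' \<union> B2' = north_set U1 \<union> north_set U2"
    "B1' \<noteq> north_set U1"
    using ac(1) by (auto simp: B1'_def B2'_def)
  moreover have "B1' \<noteq> north_set U2"
  proof
    assume "B1' = north_set U2"
    then have "north_set U1 - north_set U2 \<subseteq> {Suc a}"
      by (auto simp: B1'_def)
    then have "card (north_set U1 - north_set U2) \<le> card {Suc a}"
      by (intro card_mono) simp_all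
    then have "card (north_set U1 - north_set U2) \<le> 1"
      by simp
    then show False
      using two by simp
  qed
  ultimately show ?thesis
    by blast
qed

lemma double_exchange_north_sets:
  assumes P: "lpath m r P" and U1: "U1 \<in> region_paths m r P Q" and U2: "U2 \<in> region_paths m r P Q"
    and k: "k \<le> m + r" "ht U1 k \<noteq> ht U2 k" and two: "2 \<le> card (north_set U1 - north_set U2)"
  shows "\<exists>B1' \<in> lpm_bases m r P Q. \<exists>B2' \<in> lpm_bases m r P Q.
    B1' \<inter> B2' = north_set U1 \<inter> north_set U2 \<and> B1' \<union> B2' = north_set U1 \<union> north_set U2 \<and>
    B1' \<notin> {north_set U1, north_set U2}"
proof (cases "ht U2 k < ht U1 k")
  case True
  then show ?thesis
    using double_exchange_north_sets_above[OF P U1 U2 k(1) _ two] by blast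
next
  case False
  then have "ht U1 k < ht U2 k"
    using k(2) by linarith
  moreover have "card (north_set U1) = card (north_set U2)"
    using U1 U2 P by (simp add: card_north_set region_pathsD(1,2))
  then have "2 \<le> card (north_set U2 - north_set U1)"
    using two card_Diff_commute[of "north_set U1" "north_set U2"] north_set_subset
      finite_subset[OF north_set_subset] by simp
  ultimately obtain X Y where XY: "X \<in> lpm_bases m r P Q" "Y \<in> lpm_bases m r P Q"
    "X \<inter> Y = north_set U2 \<inter> north_set U1" "X \<union> Y = north_set U2 \<union> north_set U1"
    "X \<notin> {north_set U2, north_set U1}"
    using double_exchange_north_sets_above[OF P U2 U1 k(1)] by blast
  show ?thesis
  proof (intro bexI conjI)
    show "X \<inter> Y = north_set U1 \<inter> north_set U2" "X \<union> Y = north_set U1 \<union> north_set U2"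
      using XY(3,4) by blast+
    show "X \<notin> {north_set U1, north_set U2}"
      using XY(5) by blast
  qed (fact XY(1,2))+
qed

lemma double_exchange_lpm_bases:
  assumes P: "lpath m r P"
  shows "double_exchange (lpm_bases m r P Q)"
  unfolding double_exchange_def
proof (intro ballI impI)
  fix B1 B2 assume B1: "B1 \<in> lpm_bases m r P Q" and B2: "B2 \<in> lpm_bases m r P Q"
    and two: "2 \<le> card (B1 - B2)"
  obtain U1 U2 where U: "U1 \<in> region_paths m r P Q" "U2 \<in> region_paths m r P Q"
    and B: "B1 = north_set U1" "B2 = north_set U2"
    using B1 B2 unfolding lpm_bases_eq_north_sets by blast
  have len: "length U1 = m + r" "length U2 = m + r"
    using region_pathsD(1)[OF U(1) P] region_pathsD(1)[OF U(2) P] .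
  have "U1 \<noteq> U2"
  proof
    assume "U1 = U2"
    then have "B1 = B2"
      using B by simp
    then show False
      using two by simp
  qed
  then have "\<not> (\<forall>k \<le> length U1. ht U1 k = ht U2 k)"
    using list_eq_if_ht_eq[of U1 U2] len by argo
  then obtain k where k: "k \<le> m + r" "ht U1 k \<noteq> ht U2 k"
    using len by auto
  have "2 \<le> card (north_set U1 - north_set U2)"
    using two B by simp
  from double_exchange_north_sets[OF P U k this]
  show "\<exists>B1' \<in> lpm_bases m r P Q. \<exists>B2' \<in> lpm_bases m r P Q.
      B1' \<inter> B2' = B1 \<inter> B2 \<and> B1' \<union> B2' = B1 \<union> B2 \<and> B1' \<notin> {B1, B2}"
    unfolding B .
qed

theorem corollary5p9:
  fixes m r :: nat and P Q :: "bool list" and idx :: "nat \<Rightarrow> 'n::finite"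
  assumes "lpath m r P" and "lpath m r Q"
    and "never_above P Q"
    and "connected_region m r P Q"
    and "bij_betw idx {1..m+r} (UNIV :: 'n set)"
  shows "card (edges (lpm_polytope idx m r P Q))
           = (\<Sum>L \<in> region_paths m r P Q. area (Lprime P L) L)"
proof -
  let ?Bs = "lpm_bases m r P Q"
  define D where "D = down_exchanges ?Bs"
    \<comment> \<open>opaque, so that rewriting \<open>?Bs\<close> below leaves the argument of \<open>down_exchanges\<close> alone\<close>
  interpret set_family_polytope idx "m + r" r ?Bs
    using assms(5) lpm_basesD by unfold_locales auto
  have "lpm_polytope idx m r P Q = convex hull (ivec ` ?Bs)"
    by (simp add: lpm_polytope_def indicator_vec_def)
  then have "card (edges (lpm_polytope idx m r P Q)) = (\<Sum>B \<in> ?Bs. card (D B))"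
    using card_edges_eq_sum_down_exchanges[OF double_exchange_lpm_bases[OF assms(1)]] by (simp add: D_def)
  also have "\<dots> = (\<Sum>L \<in> region_paths m r P Q. card (D (north_set L)))"
    unfolding lpm_bases_eq_north_sets by (simp add: sum.reindex inj_on_north_set_region_paths)
  also have "\<dots> = (\<Sum>L \<in> region_paths m r P Q. area (Lprime P L) L)"
    using card_down_exchanges_north_set[OF assms(1)] by (simp add: D_def)
  finally show ?thesis .
qed

end
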